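(* Let $T>0$, $\beta=1/T$, let $I\ge 1$ be an integer, let $E_1,\dots,E_I>0$, and let $p=2\pi T m$ with $m\in\mathbb{Z}$. Define the Matsubara $D$-function of the two-vertex graph with $I$ internal lines by $$D(p,E,T)=\Big(\prod_{j=1}^I 2E_j\Big)\,T^{I-1}\sum_{n_1,\dots,n_I\in\mathbb{Z}}\ \prod_{j=1}^I\frac{1}{(2\pi T n_j)^2+E_j^2}\;\delta_{n_1+\cdots+n_I,\,m},$$ and the zero-temperature $D$-function, for real $\omega$ and real $E_1,\dots,E_I$, by $$D_0(\omega,E)=-\left(\frac{1}{i\omega-E_{\rm tot}}-\frac{1}{i\omega+E_{\rm tot}}\right),\qquad E_{\rm tot}=\sum_{j=1}^I E_j .$$ Assume that $ip-\sum_{j=1}^I\sigma_jE_j\neq 0$ for every choice of signs $\sigma_j\in\{\pm1\}$. Then: (i) $\prod_{j=1}^I(1+\mathcal{S}_j)\,D_0(\omega,E)=0$; (ii) $D(p,E,T)=\Big[\prod_{j=1}^I\big(1+n(E_j)(1+\mathcal{S}_j)\big)\Big]D_0(\omega,E)\Big|_{\omega=p}$; (iii) consequently $D(p,E,T)=\sum_{J\subsetneq\{1,\dots,I\}}\ \prod_{j\in J}n(E_j)(1+\mathcal{S}_j)\,D_0(\omega,E)\Big|_{\omega=p}$, the sum running over all proper subsets $J$ (including $J=\emptyset$, contributing $D_0$ itself), i.e. over all sets of internal lines whose removal leaves the two-vertex graph connected.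
   Context: $n(E)=(e^{\beta E}-1)^{-1}$ is the Bose–Einstein factor. $\mathcal{S}_j$ is the reflection operator in the variable $E_j$: $(\mathcal{S}_jf)(E_1,\dots,E_j,\dots,E_I)=f(E_1,\dots,-E_j,\dots,E_I)$. In the operator products, the reflections act only on $D_0$ (regarded as a function of independent real variables $E_1,\dots,E_I$), the factors $n(E_j)$ are multiplicative constants evaluated at the given positive $E_j$, and after applying the operators one evaluates at the given positive $E_j$ and at $\omega=p$. $\delta_{a,b}$ is the Kronecker delta. *)

theory Defs
  imports "HOL-Analysis.Analysis"
begin

(* Internal lines are indexed by j \<in> {0..<I} (paper: 1..I).
   Energies E :: nat \<Rightarrow> real; only the values E j for j < I matter. *)

type_synonym efun = "(nat \<Rightarrow> real) \<Rightarrow> complex"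

definition bose :: "real \<Rightarrow> real \<Rightarrow> real" where
  "bose T E = 1 / (exp (E / T) - 1)"

definition Dmats :: "nat \<Rightarrow> int \<Rightarrow> (nat \<Rightarrow> real) \<Rightarrow> real \<Rightarrow> real" where
  "Dmats I m E T =
     (\<Prod>j<I. 2 * E j) * T ^ (I - 1) *
     (\<Sum>\<^sub>\<infinity> n \<in> {n \<in> {..<I} \<rightarrow>\<^sub>E (UNIV :: int set). (\<Sum>j<I. n j) = m}.
        \<Prod>j<I. 1 / ((2 * pi * T * of_int (n j))\<^sup>2 + (E j)\<^sup>2))"

definition D0 :: "nat \<Rightarrow> real \<Rightarrow> efun" where
  "D0 I \<omega> E = - (1 / (\<i> * complex_of_real \<omega> - complex_of_real (\<Sum>j<I. E j))
                  - 1 / (\<i> * complex_of_real \<omega> + complex_of_real (\<Sum>j<I. E j)))"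

definition refl_op :: "nat \<Rightarrow> efun \<Rightarrow> efun" where
  "refl_op j f = (\<lambda>E. f (E(j := - E j)))"

definition one_plus_S :: "nat \<Rightarrow> efun \<Rightarrow> efun" where
  "one_plus_S j f = (\<lambda>E. f E + refl_op j f E)"

definition c_one_plus_S :: "complex \<Rightarrow> nat \<Rightarrow> efun \<Rightarrow> efun" where
  "c_one_plus_S c j f = (\<lambda>E. c * one_plus_S j f E)"

definition one_plus_c_S :: "complex \<Rightarrow> nat \<Rightarrow> efun \<Rightarrow> efun" where
  "one_plus_c_S c j f = (\<lambda>E. f E + c_one_plus_S c j f E)"

(* product (composition) of the commuting operators A j, j \<in> J *)
definition ops_prod :: "(nat \<Rightarrow> efun \<Rightarrow> efun) \<Rightarrow> nat set \<Rightarrow> efun \<Rightarrow> efun" where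
  "ops_prod A J f = foldr A (sorted_list_of_set J) f"

end

theory Submission
  imports Defs
begin

(* Each propagator splits into Bose-weighted Matsubara coefficients
     2E / (w_k^2 + E^2) = (1 + n(E)) F(k, E) + n(E) F(k, -E),   w_k = 2 pi T k,
   where F(k, X) = (exp (-X/T) - 1) / (i w_k - X) is the k-th Fourier coefficient of exp (-X t)
   on [0, 1/T].  These coefficients satisfy the convolution law T \<Sum>_k F(m - k, X) F(k, Y) = F(m, X + Y),
   which follows from the partial fraction expansions of pi cot (pi z) and pi^2 / sin^2 (pi z)
   (obtained from the reflection formulas for Digamma and Polygamma).  Summing line by line over the
   constrained Matsubara frequencies therefore turns D into the finite sum \<Sum>_S w_S F(m, X_S) over
   the sets S of lines with reversed energy, where w_S = \<Prod>_{j \<in> S} n_j \<Prod>_{j \<notin> S} (1 + n_j)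
   and X_S is the correspondingly signed total energy.  Since n(E) exp (E/T) = 1 + n(E), the
   exponentials are absorbed by passing to complements, and the sum becomes
   \<Sum>_S w_S D_0(p, E reflected on S), which is the expansion of the operator product in (ii).
   D_0 is odd under reflecting all energies, which gives (i); expanding
   \<Prod>_j (1 + n_j (1 + S_j)) = \<Sum>_J \<Prod>_{j \<in> J} n_j (1 + S_j), where the term of J = {all lines}
   vanishes by (i), gives (iii). *)

lemma one_minus_notin_Ints: "z \<notin> \<int> \<Longrightarrow> 1 - (z :: 'a :: ring_1) \<notin> \<int>"
  using Ints_diff[of 1 "1 - z"] by auto

lemma sin_pi_times_nonzero:
  fixes z :: complex
  assumes "z \<notin> \<int>"
  shows "sin (of_real pi * z) \<noteq> 0"
  using assms by (subst sin_eq_0) auto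

lemma Digamma_reflection_complex:
  fixes z :: complex
  assumes z: "z \<notin> \<int>"
  shows "Digamma (1 - z) - Digamma z = of_real pi * cot (of_real pi * z)"
proof -
  let ?g = "\<lambda>z::complex. Gamma z * Gamma (1 - z) * sin (of_real pi * z)"
  have sin_nz: "sin (of_real pi * z) \<noteq> 0"
    using z by (rule sin_pi_times_nonzero)
  have "(?g has_field_derivative
          Gamma z * Gamma (1 - z) * ((Digamma z - Digamma (1 - z)) * sin (of_real pi * z)
                                      + of_real pi * cos (of_real pi * z))) (at z)"
    using z one_minus_notin_Ints[OF z]
    by (auto intro!: derivative_eq_intros simp: not_in_Ints_imp_not_in_nonpos_Ints algebra_simps)
  moreover have "(?g has_field_derivative 0) (at z)"
  proof -
    have "eventually (\<lambda>t. t \<in> - \<int>) (nhds z)"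
      using z by (intro eventually_nhds_in_open) (auto simp: open_Compl)
    then have "eventually (\<lambda>t. ?g t = of_real pi) (nhds z)"
      by eventually_elim (auto simp: Gamma_reflection_complex sin_eq_0)
    then show ?thesis
      by (subst DERIV_cong_ev[OF refl _ refl]) (auto intro: DERIV_const)
  qed
  ultimately have "Gamma z * Gamma (1 - z) * ((Digamma z - Digamma (1 - z)) * sin (of_real pi * z)
                     + of_real pi * cos (of_real pi * z)) = 0"
    by (rule DERIV_unique)
  moreover have "Gamma z * Gamma (1 - z) \<noteq> 0"
    using Gamma_reflection_complex[of z] sin_nz by auto
  ultimately have "(Digamma z - Digamma (1 - z)) * sin (of_real pi * z) + of_real pi * cos (of_real pi * z) = 0"
    by simp
  then show ?thesis
    using sin_nz by (simp add: cot_def field_simps)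
qed

lemma Polygamma_1_reflection_complex:
  fixes z :: complex
  assumes z: "z \<notin> \<int>"
  shows "Polygamma 1 z + Polygamma 1 (1 - z) = of_real pi ^ 2 / sin (of_real pi * z) ^ 2"
proof -
  have "((\<lambda>z. Digamma (1 - z) - Digamma z) has_field_derivative
          - Polygamma 1 (1 - z) - Polygamma 1 z) (at z)"
    using z one_minus_notin_Ints[OF z]
    by (auto intro!: derivative_eq_intros simp: not_in_Ints_imp_not_in_nonpos_Ints)
  moreover have "((\<lambda>z. Digamma (1 - z) - Digamma z) has_field_derivative
          of_real pi * (- inverse (sin (of_real pi * z) ^ 2) * of_real pi)) (at z)"
  proof -
    have "eventually (\<lambda>t. t \<in> - \<int>) (nhds z)"
      using z by (intro eventually_nhds_in_open) (auto simp: open_Compl)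
    then have "eventually (\<lambda>t. Digamma (1 - t) - Digamma t = of_real pi * cot (of_real pi * t)) (nhds z)"
      by eventually_elim (auto intro: Digamma_reflection_complex)
    moreover have "((\<lambda>t. of_real pi * cot (of_real pi * t)) has_field_derivative
            of_real pi * (- inverse (sin (of_real pi * z) ^ 2) * of_real pi)) (at z)"
      using sin_pi_times_nonzero[OF z] by (auto intro!: derivative_eq_intros DERIV_cot[THEN DERIV_chain2])
    ultimately show ?thesis
      by (subst DERIV_cong_ev[OF refl _ refl])
  qed
  ultimately show ?thesis
    by (auto dest: DERIV_unique simp: field_simps power2_eq_square)
qed

lemma summable_norm_inverse_shifted_mult:
  fixes c d :: complex
  shows "summable (\<lambda>n::nat. norm (1 / ((of_nat n + c) * (of_nat n + d))))"
proof (rule summable_comparison_test_ev)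
  have half: "eventually (\<lambda>n::nat. norm (of_nat n + z) \<ge> real n / 2) at_top" for z :: complex
    using eventually_ge_at_top[of "nat \<lceil>2 * norm z\<rceil>"]
  proof eventually_elim
    case (elim n)
    have "norm (of_nat n :: complex) - norm z \<le> norm (of_nat n + z)"
      by (metis diff_minus_eq_add norm_minus_cancel norm_triangle_ineq2)
    with elim show ?case
      by simp
  qed
  show "eventually (\<lambda>n. norm (norm (1 / ((of_nat n + c) * (of_nat n + d)))) \<le> 4 * inverse (real n ^ 2)) at_top"
    using half[of c] half[of d] eventually_gt_at_top[of 0]
  proof eventually_elim
    case (elim n)
    have "real n / 2 * (real n / 2) \<le> norm (of_nat n + c) * norm (of_nat n + d)"
      using elim by (intro mult_mono) auto
    then have "inverse (norm (of_nat n + c) * norm (of_nat n + d)) \<le> inverse (real n / 2 * (real n / 2))"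
      using elim by (intro le_imp_inverse_le) auto
    also have "\<dots> = 4 * inverse (real n ^ 2)"
      using elim by (simp add: power2_eq_square field_simps)
    finally show ?case
      by (simp add: norm_mult norm_divide inverse_eq_divide)
  qed
  show "summable (\<lambda>n. 4 * inverse (real n ^ 2))"
    by (intro summable_mult inverse_power_summable) simp
qed

lemma has_sum_nat_inverse_diff:
  fixes c d :: complex
  assumes c: "c \<notin> \<int>\<^sub>\<le>\<^sub>0" and d: "d \<notin> \<int>\<^sub>\<le>\<^sub>0"
  shows "((\<lambda>n::nat. 1 / (of_nat n + c) - 1 / (of_nat n + d)) has_sum (Digamma d - Digamma c)) UNIV"
proof (rule norm_summable_imp_has_sum)
  have "(\<lambda>n. inverse (of_nat (Suc n)) - inverse (z + of_nat n)) sums (Digamma z + euler_mascheroni)"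
    if "z \<in> {c, d}" for z
    using that c d summable_Digamma[of z] by (auto simp: Digamma_def summable_sums)
  then have "(\<lambda>n. (inverse (of_nat (Suc n)) - inverse (d + of_nat n))
                 - (inverse (of_nat (Suc n)) - inverse (c + of_nat n)))
             sums ((Digamma d + euler_mascheroni) - (Digamma c + euler_mascheroni))"
    by (intro sums_diff) auto
  then show "(\<lambda>n::nat. 1 / (of_nat n + c) - 1 / (of_nat n + d)) sums (Digamma d - Digamma c)"
    by (simp add: divide_inverse add.commute)
  have "of_nat n + z \<noteq> 0" if "z \<notin> \<int>\<^sub>\<le>\<^sub>0" for n :: nat and z :: complex
  proof
    assume "of_nat n + z = 0"
    then have "z = - of_nat n"
      by (simp add: eq_neg_iff_add_eq_0 add.commute)
    with that show False
      by auto
  qed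
  with c d have "1 / (of_nat n + c) - 1 / (of_nat n + d) = (d - c) * (1 / ((of_nat n + c) * (of_nat n + d)))"
    for n :: nat
    by (simp add: field_simps)
  then show "summable (\<lambda>n::nat. norm (1 / (of_nat n + c) - 1 / (of_nat n + d)))"
    by (simp only: norm_mult) (intro summable_mult summable_norm_inverse_shifted_mult)
qed

lemma has_sum_nat_inverse_square:
  fixes c :: complex
  assumes "c \<notin> \<int>\<^sub>\<le>\<^sub>0"
  shows "((\<lambda>n::nat. 1 / (of_nat n + c) ^ 2) has_sum Polygamma 1 c) UNIV"
proof (rule norm_summable_imp_has_sum)
  have "c \<noteq> 0"
    using assms by auto
  then show "(\<lambda>n::nat. 1 / (of_nat n + c) ^ 2) sums Polygamma 1 c"
    using Polygamma_LIMSEQ[of c 1] by (simp add: divide_inverse add.commute power2_eq_square)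
  show "summable (\<lambda>n::nat. norm (1 / (of_nat n + c) ^ 2))"
    using summable_norm_inverse_shifted_mult[of c c] by (simp add: power2_eq_square)
qed

lemma has_sum_int_split:
  fixes f :: "int \<Rightarrow> 'a :: topological_comm_monoid_add"
  assumes "((\<lambda>n::nat. f (int n)) has_sum A) UNIV"
      and "((\<lambda>n::nat. f (- int n - 1)) has_sum B) UNIV"
  shows "(f has_sum (A + B)) UNIV"
proof -
  have "(f has_sum A) (range int)"
    using assms(1) by (subst has_sum_reindex) (simp_all add: o_def)
  moreover have "(f has_sum B) (range (\<lambda>n::nat. - int n - 1))"
    using assms(2) by (subst has_sum_reindex) (simp_all add: o_def inj_on_def)
  moreover have "range int \<inter> range (\<lambda>n::nat. - int n - 1) = {}"
    by auto
  ultimately have "(f has_sum (A + B)) (range int \<union> range (\<lambda>n::nat. - int n - 1))"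
    by (rule has_sum_Un_disjoint)
  moreover have "k \<in> range int \<or> k \<in> range (\<lambda>n::nat. - int n - 1)" for k :: int
  proof (cases "k \<ge> 0")
    case True
    then show ?thesis
      by (auto intro!: image_eqI[of _ _ "nat k"])
  next
    case False
    then show ?thesis
      by (auto intro!: image_eqI[of _ _ "nat (- k - 1)"])
  qed
  then have "range int \<union> range (\<lambda>n::nat. - int n - 1) = UNIV"
    by blast
  ultimately show ?thesis
    by simp
qed

lemma has_sum_int_inverse_diff:
  fixes c d :: complex
  assumes c: "c \<notin> \<int>" and d: "d \<notin> \<int>"
  shows "((\<lambda>k::int. 1 / (of_int k + c) - 1 / (of_int k + d)) has_sum
            (of_real pi * cot (of_real pi * c) - of_real pi * cot (of_real pi * d))) UNIV"
proof -
  have neg: "1 / (of_int (- int n - 1) + c) - 1 / (of_int (- int n - 1) + d)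
              = 1 / (of_nat n + (1 - d)) - 1 / (of_nat n + (1 - c))" for n :: nat
  proof -
    have "of_int (- int n - 1) + z = - (of_nat n + (1 - z))" for z :: complex
      by simp
    then show ?thesis
      by (simp only: divide_minus_right minus_diff_minus minus_diff_eq)
  qed
  have "((\<lambda>k::int. 1 / (of_int k + c) - 1 / (of_int k + d)) has_sum
          ((Digamma d - Digamma c) + (Digamma (1 - c) - Digamma (1 - d)))) UNIV"
  proof (rule has_sum_int_split)
    show "((\<lambda>n. 1 / (of_int (int n) + c) - 1 / (of_int (int n) + d)) has_sum (Digamma d - Digamma c)) UNIV"
      using has_sum_nat_inverse_diff[of c d] c d by (simp add: not_in_Ints_imp_not_in_nonpos_Ints)
    show "((\<lambda>n. 1 / (of_int (- int n - 1) + c) - 1 / (of_int (- int n - 1) + d)) has_sum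
            (Digamma (1 - c) - Digamma (1 - d))) UNIV"
      unfolding neg using c d
      by (intro has_sum_nat_inverse_diff not_in_Ints_imp_not_in_nonpos_Ints one_minus_notin_Ints)
  qed
  also have "(Digamma d - Digamma c) + (Digamma (1 - c) - Digamma (1 - d))
             = of_real pi * cot (of_real pi * c) - of_real pi * cot (of_real pi * d)"
    using Digamma_reflection_complex[OF c] Digamma_reflection_complex[OF d] by algebra
  finally show ?thesis .
qed

lemma has_sum_int_inverse_square:
  fixes c :: complex
  assumes c: "c \<notin> \<int>"
  shows "((\<lambda>k::int. 1 / (of_int k + c) ^ 2) has_sum (of_real pi ^ 2 / sin (of_real pi * c) ^ 2)) UNIV"
proof -
  have neg: "1 / (of_int (- int n - 1) + c) ^ 2 = 1 / (of_nat n + (1 - c)) ^ 2" for n :: nat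
  proof -
    have "of_int (- int n - 1) + c = - (of_nat n + (1 - c))"
      by simp
    then show ?thesis
      by (simp only: power2_minus)
  qed
  have "((\<lambda>k::int. 1 / (of_int k + c) ^ 2) has_sum (Polygamma 1 c + Polygamma 1 (1 - c))) UNIV"
  proof (rule has_sum_int_split)
    show "((\<lambda>n. 1 / (of_int (int n) + c) ^ 2) has_sum Polygamma 1 c) UNIV"
      using has_sum_nat_inverse_square[of c] c by (simp add: not_in_Ints_imp_not_in_nonpos_Ints)
    show "((\<lambda>n. 1 / (of_int (- int n - 1) + c) ^ 2) has_sum Polygamma 1 (1 - c)) UNIV"
      unfolding neg using c
      by (intro has_sum_nat_inverse_square not_in_Ints_imp_not_in_nonpos_Ints one_minus_notin_Ints)
  qed
  also have "Polygamma 1 c + Polygamma 1 (1 - c) = of_real pi ^ 2 / sin (of_real pi * c) ^ 2"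
    using c by (rule Polygamma_1_reflection_complex)
  finally show ?thesis .
qed

lemma exp_two_i_neq_1:
  fixes w :: complex
  assumes "sin w \<noteq> 0"
  shows "exp (2 * \<i> * w) \<noteq> 1"
proof -
  define u where "u = exp (\<i> * w)"
  have u: "u \<noteq> 0" "exp (2 * \<i> * w) = u * u"
    by (simp_all add: u_def mult.assoc flip: exp_add)
  have "sin w = (u - 1 / u) / (2 * \<i>)"
    by (simp add: sin_exp_eq u_def exp_minus inverse_eq_divide)
  with assms u show ?thesis
    by (auto simp: field_simps)
qed

lemma cot_conv_exp:
  fixes w :: complex
  assumes "sin w \<noteq> 0"
  shows "cot w = \<i> + 2 * \<i> / (exp (2 * \<i> * w) - 1)"
proof -
  define u where "u = exp (\<i> * w)"
  have u: "u \<noteq> 0" "exp (2 * \<i> * w) = u * u"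
    by (simp_all add: u_def mult.assoc flip: exp_add)
  have sin: "sin w = (u - 1 / u) / (2 * \<i>)" and cos: "cos w = (u + 1 / u) / 2"
    by (simp_all add: sin_exp_eq cos_exp_eq u_def exp_minus inverse_eq_divide)
  have "u * u \<noteq> 1"
    using exp_two_i_neq_1[OF assms] u by simp
  with u show ?thesis
    unfolding cot_def sin cos by (simp add: field_simps)
qed

lemma inverse_sin_square_conv_exp:
  fixes w :: complex
  assumes "sin w \<noteq> 0"
  shows "1 / sin w ^ 2 = - 4 * exp (2 * \<i> * w) / (exp (2 * \<i> * w) - 1) ^ 2"
proof -
  define u where "u = exp (\<i> * w)"
  have u: "u \<noteq> 0" "exp (2 * \<i> * w) = u * u"
    by (simp_all add: u_def mult.assoc flip: exp_add)
  have sin: "sin w = (u - 1 / u) / (2 * \<i>)"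
    by (simp add: sin_exp_eq u_def exp_minus inverse_eq_divide)
  have "u * u \<noteq> 1"
    using exp_two_i_neq_1[OF assms] u by simp
  with u show ?thesis
    unfolding sin by (simp add: field_simps power2_eq_square)
qed

lemma pi_cot_conv_exp:
  fixes z :: complex
  assumes "z \<notin> \<int>"
  shows "of_real pi * cot (of_real pi * z)
           = 2 * \<i> * of_real pi * (1 / 2 + 1 / (exp (2 * \<i> * (of_real pi * z)) - 1))"
  using cot_conv_exp[OF sin_pi_times_nonzero[OF assms]] by (simp add: algebra_simps)

lemma sin_cos_pi_times_of_int:
  "sin (of_real pi * of_int m :: complex) = 0" "cos (of_real pi * of_int m :: complex) ^ 2 = 1"
proof -
  show sin: "sin (of_real pi * of_int m :: complex) = 0"
    using sin_int_times_real[of m pi] by (simp add: mult.commute)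
  show "cos (of_real pi * of_int m :: complex) ^ 2 = 1"
    using sin_cos_squared_add[of "of_real pi * of_int m :: complex"] sin by simp
qed

lemma cot_pi_shift: "cot (of_real pi * (of_int m + u)) = cot (of_real pi * (u :: complex))"
proof -
  have "cos (of_real pi * of_int m :: complex) \<noteq> 0"
    using sin_cos_pi_times_of_int(2)[of m] by auto
  then show ?thesis
    by (simp add: cot_def distrib_left sin_add cos_add sin_cos_pi_times_of_int(1))
qed

lemma sin_square_pi_shift: "sin (of_real pi * (of_int m + u)) ^ 2 = sin (of_real pi * (u :: complex)) ^ 2"
  by (simp add: distrib_left sin_add sin_cos_pi_times_of_int power_mult_distrib)

lemma inverse_mult_partial_fraction:
  fixes P Q :: "'a :: field"
  assumes "P \<noteq> 0" and "Q \<noteq> 0" and "P + Q \<noteq> 0"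
  shows "1 / (P * Q) = (1 / P + 1 / Q) / (P + Q)"
proof -
  have "1 / P + 1 / Q = (P + Q) / (P * Q)"
    using assms by (simp add: add_frac_eq)
  with assms(3) show ?thesis
    by simp
qed

lemma of_int_add_neq_0_if_notin_Ints: "z \<notin> \<int> \<Longrightarrow> of_int k + z \<noteq> (0 :: 'a :: ring_1)"
  by (metis Ints_minus Ints_of_int add.commute add_eq_0_iff)

lemma has_sum_int_pole_convolution:
  fixes u v :: complex
  defines "e \<equiv> \<lambda>z. exp (2 * \<i> * (of_real pi * z))"
  assumes u: "u \<notin> \<int>" and v: "v \<notin> \<int>" and nz: "of_int m + u + v \<noteq> 0"
  shows "((\<lambda>k::int. 1 / ((of_int (m - k) + u) * (of_int k + v))) has_sum
            2 * \<i> * of_real pi * (1 + 1 / (e u - 1) + 1 / (e v - 1)) / (of_int m + u + v)) UNIV"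
proof -
  define c where "c = - (of_int m + u)"
  have c: "c \<notin> \<int>"
    using u Ints_diff[of "- c" "of_int m"] by (auto simp: c_def)
  have split: "1 / ((of_int (m - k) + u) * (of_int k + v))
                 = (1 / (of_int k + v) - 1 / (of_int k + c)) / (of_int m + u + v)" for k
  proof -
    have P: "of_int (m - k) + u = - (of_int k + c)"
      by (simp add: c_def)
    have "of_int (m - k) + u \<noteq> 0"
      unfolding P using of_int_add_neq_0_if_notin_Ints[OF c, of k]
      by (simp only: neg_equal_0_iff_equal not_False_eq_True)
    then have "1 / ((of_int (m - k) + u) * (of_int k + v))
                 = (1 / (of_int (m - k) + u) + 1 / (of_int k + v)) / ((of_int (m - k) + u) + (of_int k + v))"
      using of_int_add_neq_0_if_notin_Ints[OF v] nz
      by (intro inverse_mult_partial_fraction) (simp_all add: add_ac)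
    also have "\<dots> = (1 / (of_int k + v) - 1 / (of_int k + c)) / (of_int m + u + v)"
      by (simp only: P divide_minus_right) (simp add: c_def)
    finally show ?thesis .
  qed
  have "((\<lambda>k::int. 1 / ((of_int (m - k) + u) * (of_int k + v))) has_sum
          (of_real pi * cot (of_real pi * v) - of_real pi * cot (of_real pi * c)) / (of_int m + u + v)) UNIV"
    unfolding split by (intro has_sum_divide_const has_sum_int_inverse_diff v c)
  also have "of_real pi * cot (of_real pi * v) - of_real pi * cot (of_real pi * c)
               = of_real pi * cot (of_real pi * u) + of_real pi * cot (of_real pi * v)"
  proof -
    have "of_real pi * c = - (of_real pi * (of_int m + u))"
      by (simp add: c_def algebra_simps)
    then show ?thesis
      by (simp only: cot_minus cot_pi_shift) (simp add: algebra_simps)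
  qed
  also have "\<dots> = 2 * \<i> * of_real pi * (1 + 1 / (e u - 1) + 1 / (e v - 1))"
    using pi_cot_conv_exp[OF u] pi_cot_conv_exp[OF v] by (simp add: e_def algebra_simps)
  finally show ?thesis .
qed

lemma has_sum_int_pole_convolution_degenerate:
  fixes u :: complex
  defines "e \<equiv> exp (2 * \<i> * (of_real pi * u))"
  assumes u: "u \<notin> \<int>"
  shows "((\<lambda>k::int. 1 / ((of_int (m - k) + u) * (of_int k - (of_int m + u)))) has_sum
            4 * of_real pi ^ 2 * e / (e - 1) ^ 2) UNIV"
proof -
  define c where "c = - (of_int m + u)"
  have c: "c \<notin> \<int>"
    using u Ints_diff[of "- c" "of_int m"] by (auto simp: c_def)
  have "1 / ((of_int (m - k) + u) * (of_int k - (of_int m + u))) = - (1 / (of_int k + c) ^ 2)" for k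
  proof -
    have "of_int (m - k) + u = - (of_int k + c)" "of_int k - (of_int m + u) = of_int k + c"
      by (simp_all add: c_def)
    then show ?thesis
      by (simp only: mult_minus_left divide_minus_right power2_eq_square)
  qed
  then have "((\<lambda>k::int. 1 / ((of_int (m - k) + u) * (of_int k - (of_int m + u)))) has_sum
               - (of_real pi ^ 2 / sin (of_real pi * c) ^ 2)) UNIV"
    by (simp only:) (intro has_sum_uminusI has_sum_int_inverse_square c)
  also have "sin (of_real pi * c) ^ 2 = sin (of_real pi * u) ^ 2"
  proof -
    have "of_real pi * c = - (of_real pi * (of_int m + u))"
      by (simp add: c_def algebra_simps)
    then show ?thesis
      by (simp only: sin_minus power2_minus sin_square_pi_shift)
  qed
  also have "- (of_real pi ^ 2 / sin (of_real pi * u) ^ 2) = 4 * of_real pi ^ 2 * e / (e - 1) ^ 2"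
    using inverse_sin_square_conv_exp[OF sin_pi_times_nonzero[OF u]]
    by (simp add: e_def divide_inverse mult.assoc)
  finally show ?thesis .
qed

definition matsubara_pole :: "real \<Rightarrow> real \<Rightarrow> complex" where
  "matsubara_pole T X = \<i> * of_real (X / (2 * pi * T))"

(* For m = 0 and X = 0 the Fourier coefficient is 1/T, the removable value of the general formula. *)
definition matsubara_coeff :: "real \<Rightarrow> int \<Rightarrow> real \<Rightarrow> complex" where
  "matsubara_coeff T m X =
     (if m = 0 \<and> X = 0 then complex_of_real (1 / T)
      else (of_real (exp (- X / T)) - 1) / (\<i> * of_real (2 * pi * T * of_int m) - of_real X))"

lemma matsubara_coeff_zero_energy: "m \<noteq> 0 \<Longrightarrow> matsubara_coeff T m 0 = 0"
  by (simp add: matsubara_coeff_def)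

lemma matsubara_coeff_pole_form:
  assumes "T > 0" and "m \<noteq> 0 \<or> X \<noteq> 0"
  shows "matsubara_coeff T m X
           = (of_real (exp (- X / T)) - 1) / (2 * \<i> * of_real pi * of_real T * (of_int m + matsubara_pole T X))"
proof -
  have "\<i> * of_real (2 * pi * T * of_int m) - of_real X
          = 2 * \<i> * of_real pi * of_real T * (of_int m + matsubara_pole T X)"
    using assms(1) by (simp add: matsubara_pole_def field_simps)
  moreover have "\<not> (m = 0 \<and> X = 0)"
    using assms(2) by blast
  ultimately show ?thesis
    by (simp only: matsubara_coeff_def if_False)
qed

lemma matsubara_pole_not_Ints:
  assumes "T > 0" and "X \<noteq> 0"
  shows "matsubara_pole T X \<notin> \<int>"
proof
  assume "matsubara_pole T X \<in> \<int>"
  then have "Im (matsubara_pole T X) = 0"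
    by (auto elim: Ints_cases)
  with assms show False
    by (simp add: matsubara_pole_def)
qed

lemma matsubara_pole_add: "matsubara_pole T (X + Y) = matsubara_pole T X + matsubara_pole T Y"
  by (simp add: matsubara_pole_def add_divide_distrib algebra_simps)

lemma of_int_add_matsubara_pole_eq_0_iff:
  assumes "T > 0"
  shows "of_int m + matsubara_pole T X = 0 \<longleftrightarrow> m = 0 \<and> X = 0"
  using assms by (auto simp: matsubara_pole_def complex_eq_iff)

lemma exp_matsubara_pole:
  assumes "T \<noteq> 0"
  shows "exp (2 * \<i> * (of_real pi * matsubara_pole T X)) = of_real (exp (- X / T))"
proof -
  have "2 * \<i> * (of_real pi * matsubara_pole T X) = of_real (- X / T)"
    using assms by (simp add: matsubara_pole_def field_simps)
  then show ?thesis
    by (simp only: exp_of_real)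
qed

lemma matsubara_coeff_mult_pole_form:
  assumes T: "T > 0" and X: "X \<noteq> 0" and Y: "Y \<noteq> 0"
  shows "of_real T * matsubara_coeff T (m - k) X * matsubara_coeff T k Y
           = of_real T * (of_real (exp (- X / T)) - 1) * (of_real (exp (- Y / T)) - 1)
               / (of_real T * (2 * \<i> * of_real pi)) ^ 2
               * (1 / ((of_int (m - k) + matsubara_pole T X) * (of_int k + matsubara_pole T Y)))"
proof -
  have "matsubara_coeff T (m - k) X
          = (of_real (exp (- X / T)) - 1) / (of_real T * (2 * \<i> * of_real pi) * (of_int (m - k) + matsubara_pole T X))"
    and "matsubara_coeff T k Y
          = (of_real (exp (- Y / T)) - 1) / (of_real T * (2 * \<i> * of_real pi) * (of_int k + matsubara_pole T Y))"
    using T X Y by (simp_all add: matsubara_coeff_pole_form mult_ac)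
  then show ?thesis
    by (simp add: power2_eq_square)
qed

lemma matsubara_coeff_convolution_nondegenerate:
  assumes T: "T > 0" and X: "X \<noteq> 0" and Y: "Y \<noteq> 0" and nz: "m \<noteq> 0 \<or> X + Y \<noteq> 0"
  shows "((\<lambda>k. of_real T * matsubara_coeff T (m - k) X * matsubara_coeff T k Y)
            has_sum matsubara_coeff T m (X + Y)) UNIV"
proof -
  define t p u v where "t = complex_of_real T" and "p = 2 * \<i> * complex_of_real pi"
    and "u = matsubara_pole T X" and "v = matsubara_pole T Y"
  define a b where "a = complex_of_real (exp (- X / T))" and "b = complex_of_real (exp (- Y / T))"
  have S: "of_int m + u + v = of_int m + matsubara_pole T (X + Y)"
    by (simp add: u_def v_def matsubara_pole_add add.assoc)
  have S_nz: "of_int m + u + v \<noteq> 0"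
    unfolding S using nz T by (simp add: of_int_add_matsubara_pole_eq_0_iff)
  have "((\<lambda>k. 1 / ((of_int (m - k) + u) * (of_int k + v))) has_sum
          p * (1 + 1 / (a - 1) + 1 / (b - 1)) / (of_int m + u + v)) UNIV"
    using has_sum_int_pole_convolution[OF _ _ S_nz] T X Y
    by (simp add: p_def u_def v_def a_def b_def matsubara_pole_not_Ints exp_matsubara_pole)
  from has_sum_cmult_right[OF this, of "t * (a - 1) * (b - 1) / (t * p) ^ 2"]
  have "((\<lambda>k. of_real T * matsubara_coeff T (m - k) X * matsubara_coeff T k Y) has_sum
          t * (a - 1) * (b - 1) / (t * p) ^ 2 * (p * (1 + 1 / (a - 1) + 1 / (b - 1)) / (of_int m + u + v))) UNIV"
    unfolding matsubara_coeff_mult_pole_form[OF T X Y] by (simp only: t_def p_def u_def v_def a_def b_def)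
  also have "\<dots> = (a * b - 1) / (t * p * (of_int m + u + v))"
  proof -
    have "t * P * Q / (t * p) ^ 2 * (p * (1 + 1 / P + 1 / Q) / S) = ((P + 1) * (Q + 1) - 1) / (t * p * S)"
      if "t \<noteq> 0" "p \<noteq> 0" "P \<noteq> 0" "Q \<noteq> 0" "S \<noteq> 0" for t p P Q S :: complex
      using that by (simp add: field_simps power2_eq_square)
    from this[of t p "a - 1" "b - 1" "of_int m + u + v"] show ?thesis
      using T X Y S_nz by (simp add: t_def p_def a_def b_def)
  qed
  also have "\<dots> = matsubara_coeff T m (X + Y)"
  proof -
    have "a * b = of_real (exp (- (X + Y) / T))"
      by (simp add: a_def b_def diff_divide_distrib flip: of_real_mult exp_add)
    then show ?thesis
      using T nz by (simp add: matsubara_coeff_pole_form S t_def p_def mult_ac)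
  qed
  finally show ?thesis .
qed

lemma matsubara_coeff_convolution_degenerate:
  assumes T: "T > 0" and X: "X \<noteq> 0"
  shows "((\<lambda>k. of_real T * matsubara_coeff T (- k) X * matsubara_coeff T k (- X)) has_sum 1 / of_real T) UNIV"
proof -
  define t p u where "t = complex_of_real T" and "p = 2 * \<i> * complex_of_real pi" and "u = matsubara_pole T X"
  define a where "a = complex_of_real (exp (- X / T))"
  have a: "a \<noteq> 0" "a \<noteq> 1" and b: "complex_of_real (exp (- (- X) / T)) - 1 = - (a - 1) / a"
    using T X by (simp_all add: a_def exp_minus field_simps)
  have neg_X: "- X \<noteq> 0"
    using X by simp
  have pole_minus: "of_int k + matsubara_pole T (- X) = of_int k - (of_int 0 + u)" for k
    by (simp add: u_def matsubara_pole_def)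
  have "- (p ^ 2) = 4 * of_real pi ^ 2"
    by (simp add: p_def power_mult_distrib)
  then have "((\<lambda>k::int. 1 / ((of_int (0 - k) + u) * (of_int k - (of_int 0 + u)))) has_sum
               - (p ^ 2) * a / (a - 1) ^ 2) UNIV"
    using has_sum_int_pole_convolution_degenerate[of u 0] T X
    by (simp add: u_def a_def matsubara_pole_not_Ints exp_matsubara_pole)
  from has_sum_cmult_right[OF this, of "t * (a - 1) * (- (a - 1) / a) / (t * p) ^ 2"]
  have "((\<lambda>k. of_real T * matsubara_coeff T (0 - k) X * matsubara_coeff T k (- X)) has_sum
          t * (a - 1) * (- (a - 1) / a) / (t * p) ^ 2 * (- (p ^ 2) * a / (a - 1) ^ 2)) UNIV"
    unfolding matsubara_coeff_mult_pole_form[OF T X neg_X] b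
    by (simp only: t_def p_def u_def a_def pole_minus)
  also have "t * (a - 1) * (- (a - 1) / a) / (t * p) ^ 2 * (- (p ^ 2) * a / (a - 1) ^ 2) = 1 / t"
  proof -
    have cancel: "t * P * (- P / A) / (t * p) ^ 2 * (- (p ^ 2) * A / P ^ 2) = 1 / t"
      if "t \<noteq> 0" "p \<noteq> 0" "P \<noteq> 0" "A \<noteq> 0" for t p P A :: complex
      using that by (simp add: field_simps power2_eq_square)
    show ?thesis
      by (rule cancel) (use T a in \<open>simp_all add: t_def p_def\<close>)
  qed
  finally show ?thesis
    by (simp add: t_def)
qed

lemma matsubara_coeff_convolution:
  assumes T: "T > 0" and Y: "Y \<noteq> 0"
  shows "((\<lambda>k. of_real T * matsubara_coeff T (m - k) X * matsubara_coeff T k Y)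
            has_sum matsubara_coeff T m (X + Y)) UNIV"
proof -
  consider "X = 0" | "X \<noteq> 0" "m \<noteq> 0 \<or> X + Y \<noteq> 0" | "X \<noteq> 0" "m = 0" "Y = - X"
    by linarith
  then show ?thesis
  proof cases
    case 1
    show ?thesis
    proof (rule has_sum_finite_neutralI[of "{m}"])
      show "of_real T * matsubara_coeff T (m - k) X * matsubara_coeff T k Y = 0" if "k \<in> UNIV - {m}" for k
        using that 1 by (simp add: matsubara_coeff_zero_energy)
      show "matsubara_coeff T m (X + Y) = (\<Sum>k\<in>{m}. of_real T * matsubara_coeff T (m - k) X * matsubara_coeff T k Y)"
        using 1 T by (simp add: matsubara_coeff_def)
    qed auto
  next
    case 2
    then show ?thesis
      using T Y by (intro matsubara_coeff_convolution_nondegenerate)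
  next
    case 3
    then show ?thesis
      using matsubara_coeff_convolution_degenerate[OF T \<open>X \<noteq> 0\<close>] by (simp add: matsubara_coeff_def)
  qed
qed

definition reflect_on :: "nat set \<Rightarrow> (nat \<Rightarrow> real) \<Rightarrow> nat \<Rightarrow> real" where
  "reflect_on S E j = (if j \<in> S then - E j else E j)"

lemma reflect_on_empty [simp]: "reflect_on {} E = E"
  by (simp add: reflect_on_def fun_eq_iff)

lemma reflect_on_update: "x \<notin> S \<Longrightarrow> reflect_on S (E(x := - E x)) = reflect_on (insert x S) E"
  by (auto simp: reflect_on_def fun_eq_iff)

lemma sum_reflect_on_Diff:
  assumes "S \<subseteq> A"
  shows "(\<Sum>j\<in>A. reflect_on (A - S) E j) = - (\<Sum>j\<in>A. reflect_on S E j)"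
  unfolding sum_negf[symmetric] using assms by (intro sum.cong) (auto simp: reflect_on_def)

lemma sum_Pow_insert:
  assumes "finite A" and "x \<notin> A"
  shows "(\<Sum>S\<in>Pow (insert x A). g S) = (\<Sum>S\<in>Pow A. g S) + (\<Sum>S\<in>Pow A. g (insert x S))"
proof -
  have "(\<Sum>S\<in>Pow (insert x A). g S) = (\<Sum>S\<in>Pow A. g S) + (\<Sum>S\<in>insert x ` Pow A. g S)"
    unfolding Pow_insert using assms by (intro sum.union_disjoint) auto
  also have "(\<Sum>S\<in>insert x ` Pow A. g S) = (\<Sum>S\<in>Pow A. g (insert x S))"
    using assms(2) by (subst sum.reindex) (auto intro!: inj_onI)
  finally show ?thesis .
qed

lemma sum_Pow_insert_weighted:
  fixes a b :: "'a \<Rightarrow> 'b :: comm_semiring_1"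
  assumes "finite A" and "x \<notin> A"
  shows "(\<Sum>S\<in>Pow (insert x A). (\<Prod>j\<in>S. b j) * (\<Prod>j\<in>insert x A - S. a j) * g S)
           = (\<Sum>S\<in>Pow A. (\<Prod>j\<in>S. b j) * (\<Prod>j\<in>A - S. a j) * (a x * g S + b x * g (insert x S)))"
proof -
  have "(\<Prod>j\<in>insert x A - S. a j) = a x * (\<Prod>j\<in>A - S. a j)"
    and "(\<Prod>j\<in>insert x S. b j) = b x * (\<Prod>j\<in>S. b j)"
    and "insert x A - insert x S = A - S" if "S \<in> Pow A" for S
  proof -
    from that assms have "x \<notin> S" and "finite S"
      by (auto intro: finite_subset)
    with assms show "(\<Prod>j\<in>insert x A - S. a j) = a x * (\<Prod>j\<in>A - S. a j)"
      and "(\<Prod>j\<in>insert x S. b j) = b x * (\<Prod>j\<in>S. b j)"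
      and "insert x A - insert x S = A - S"
      by (auto simp: insert_Diff_if)
  qed
  then show ?thesis
    unfolding sum_Pow_insert[OF assms] sum.distrib[symmetric]
    by (intro sum.cong) (auto simp: algebra_simps)
qed

lemma foldr_reflection_ops:
  fixes A :: "nat \<Rightarrow> efun \<Rightarrow> efun"
  assumes ops: "\<And>j f E. A j f E = a j * f E + b j * f (E(j := - E j))"
    and "distinct xs"
  shows "foldr A xs f E = (\<Sum>S\<in>Pow (set xs). (\<Prod>j\<in>S. b j) * (\<Prod>j\<in>set xs - S. a j) * f (reflect_on S E))"
  using assms(2)
proof (induction xs arbitrary: E)
  case Nil
  then show ?case
    by simp
next
  case (Cons x xs)
  let ?w = "\<lambda>S. (\<Prod>j\<in>S. b j) * (\<Prod>j\<in>set xs - S. a j)"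
  have x: "x \<notin> set xs" and IH: "\<And>E. foldr A xs f E = (\<Sum>S\<in>Pow (set xs). ?w S * f (reflect_on S E))"
    using Cons by auto
  have "foldr A (x # xs) f E = a x * foldr A xs f E + b x * foldr A xs f (E(x := - E x))"
    by (simp add: ops)
  also have "\<dots> = (\<Sum>S\<in>Pow (set xs). ?w S * (a x * f (reflect_on S E) + b x * f (reflect_on (insert x S) E)))"
    unfolding IH sum_distrib_left sum.distrib[symmetric]
  proof (intro sum.cong refl)
    fix S assume "S \<in> Pow (set xs)"
    with x have "x \<notin> S"
      by blast
    then show "a x * (?w S * f (reflect_on S E)) + b x * (?w S * f (reflect_on S (E(x := - E x))))
                 = ?w S * (a x * f (reflect_on S E) + b x * f (reflect_on (insert x S) E))"
      by (simp add: reflect_on_update algebra_simps)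
  qed
  also have "\<dots> = (\<Sum>S\<in>Pow (set (x # xs)). (\<Prod>j\<in>S. b j) * (\<Prod>j\<in>set (x # xs) - S. a j) * f (reflect_on S E))"
    using sum_Pow_insert_weighted[OF finite_set x, of b a "\<lambda>S. f (reflect_on S E)"] by simp
  finally show ?case .
qed

lemma ops_prod_reflections:
  fixes A :: "nat \<Rightarrow> efun \<Rightarrow> efun"
  assumes "\<And>j f E. A j f E = a j * f E + b j * f (E(j := - E j))" and "finite J"
  shows "ops_prod A J f E = (\<Sum>S\<in>Pow J. (\<Prod>j\<in>S. b j) * (\<Prod>j\<in>J - S. a j) * f (reflect_on S E))"
  using assms unfolding ops_prod_def by (simp add: foldr_reflection_ops)

lemma ops_prod_one_plus_S:
  "finite J \<Longrightarrow> ops_prod one_plus_S J f E = (\<Sum>S\<in>Pow J. f (reflect_on S E))"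
  by (subst ops_prod_reflections[where a = "\<lambda>_. 1" and b = "\<lambda>_. 1"])
     (simp_all add: one_plus_S_def refl_op_def)

lemma ops_prod_one_plus_c_S:
  "finite J \<Longrightarrow> ops_prod (\<lambda>j. one_plus_c_S (c j) j) J f E
     = (\<Sum>S\<in>Pow J. (\<Prod>j\<in>S. c j) * (\<Prod>j\<in>J - S. 1 + c j) * f (reflect_on S E))"
  by (rule ops_prod_reflections)
     (simp_all add: one_plus_c_S_def c_one_plus_S_def one_plus_S_def refl_op_def algebra_simps)

lemma ops_prod_c_one_plus_S:
  assumes "finite J"
  shows "ops_prod (\<lambda>j. c_one_plus_S (c j) j) J f E = (\<Prod>j\<in>J. c j) * (\<Sum>S\<in>Pow J. f (reflect_on S E))"
proof -
  have "ops_prod (\<lambda>j. c_one_plus_S (c j) j) J f E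
          = (\<Sum>S\<in>Pow J. (\<Prod>j\<in>S. c j) * (\<Prod>j\<in>J - S. c j) * f (reflect_on S E))"
    by (rule ops_prod_reflections[OF _ assms]) (simp add: c_one_plus_S_def one_plus_S_def refl_op_def algebra_simps)
  also have "\<dots> = (\<Prod>j\<in>J. c j) * (\<Sum>S\<in>Pow J. f (reflect_on S E))"
    using assms by (auto simp: sum_distrib_left prod.subset_diff[of _ J] mult_ac intro!: sum.cong)
  finally show ?thesis .
qed

lemma sum_Pow_prod_sum_Pow:
  fixes c :: "'a \<Rightarrow> 'b::comm_semiring_1"
  assumes "finite A"
  shows "(\<Sum>J\<in>Pow A. (\<Prod>j\<in>J. c j) * (\<Sum>S\<in>Pow J. h S))
           = (\<Sum>S\<in>Pow A. (\<Prod>j\<in>S. c j) * (\<Prod>j\<in>A - S. 1 + c j) * h S)"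
proof -
  have fin: "finite (Pow A)"
    using assms by simp
  have "(\<Sum>J\<in>Pow A. (\<Prod>j\<in>J. c j) * (\<Sum>S\<in>Pow J. h S))
          = (\<Sum>J\<in>Pow A. \<Sum>S\<in>{S. S \<in> Pow A \<and> S \<subseteq> J}. (\<Prod>j\<in>J. c j) * h S)"
    by (intro sum.cong refl) (auto simp: sum_distrib_left intro!: sum.cong)
  also have "\<dots> = (\<Sum>S\<in>Pow A. \<Sum>J\<in>{J. J \<in> Pow A \<and> S \<subseteq> J}. (\<Prod>j\<in>J. c j) * h S)"
    by (rule sum.swap_restrict[OF fin fin])
  also have "\<dots> = (\<Sum>S\<in>Pow A. (\<Prod>j\<in>S. c j) * (\<Prod>j\<in>A - S. 1 + c j) * h S)"
  proof (intro sum.cong refl)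
    fix S assume S: "S \<in> Pow A"
    have "(\<Sum>J\<in>{J. J \<in> Pow A \<and> S \<subseteq> J}. (\<Prod>j\<in>J. c j)) = (\<Sum>K\<in>Pow (A - S). \<Prod>j\<in>S \<union> K. c j)"
      using S by (intro sum.reindex_bij_witness[where i = "\<lambda>K. S \<union> K" and j = "\<lambda>J. J - S"])
        (auto simp: Un_absorb1)
    also have "\<dots> = (\<Prod>j\<in>S. c j) * (\<Sum>K\<in>Pow (A - S). \<Prod>j\<in>K. c j)"
      using S assms by (auto simp: sum_distrib_left finite_subset intro!: sum.cong prod.union_disjoint)
    also have "(\<Sum>K\<in>Pow (A - S). \<Prod>j\<in>K. c j) = (\<Prod>j\<in>A - S. 1 + c j)"
      using prod_add[of "A - S" c "\<lambda>_. 1"] assms by (simp add: add.commute)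
    finally show "(\<Sum>J\<in>{J. J \<in> Pow A \<and> S \<subseteq> J}. (\<Prod>j\<in>J. c j) * h S)
                    = (\<Prod>j\<in>S. c j) * (\<Prod>j\<in>A - S. 1 + c j) * h S"
      by (simp flip: sum_distrib_right)
  qed
  finally show ?thesis .
qed

lemma sum_proper_subsets_ops_prod_c_one_plus_S:
  assumes "finite A"
  shows "(\<Sum>J\<in>{J. J \<subset> A}. ops_prod (\<lambda>j. c_one_plus_S (c j) j) J f E)
           = ops_prod (\<lambda>j. one_plus_c_S (c j) j) A f E - (\<Prod>j\<in>A. c j) * (\<Sum>S\<in>Pow A. f (reflect_on S E))"
proof -
  have "{J. J \<subset> A} = Pow A - {A}"
    by auto
  moreover have "finite J" if "J \<in> Pow A" for J
    using that assms finite_subset by auto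
  ultimately show ?thesis
    using assms by (simp add: sum_diff1 ops_prod_c_one_plus_S ops_prod_one_plus_c_S sum_Pow_prod_sum_Pow)
qed

lemma sum_Pow_Diff: "(\<Sum>S\<in>Pow A. g (A - S)) = (\<Sum>S\<in>Pow A. g S)"
  by (rule sum.reindex_bij_witness[where i = "\<lambda>S. A - S" and j = "\<lambda>S. A - S"]) auto

lemma D0_reflect_on:
  "D0 I \<omega> (reflect_on S E) = 1 / (\<i> * of_real \<omega> + of_real (\<Sum>j<I. reflect_on S E j))
                                - 1 / (\<i> * of_real \<omega> - of_real (\<Sum>j<I. reflect_on S E j))"
  by (simp add: D0_def)

lemma sum_Pow_D0_reflect_on: "(\<Sum>S\<in>Pow {..<I}. D0 I \<omega> (reflect_on S E)) = 0"
proof -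
  have "(\<Sum>S\<in>Pow {..<I}. D0 I \<omega> (reflect_on S E)) = (\<Sum>S\<in>Pow {..<I}. D0 I \<omega> (reflect_on ({..<I} - S) E))"
    by (rule sum_Pow_Diff[symmetric])
  also have "\<dots> = - (\<Sum>S\<in>Pow {..<I}. D0 I \<omega> (reflect_on S E))"
    unfolding sum_negf[symmetric]
    by (intro sum.cong refl) (simp del: of_real_sum add: D0_reflect_on sum_reflect_on_Diff)
  finally show ?thesis
    by simp
qed

lemma has_sum_sum:
  fixes f :: "'i \<Rightarrow> 'a \<Rightarrow> 'b::topological_comm_monoid_add"
  assumes "finite F" and "\<And>i. i \<in> F \<Longrightarrow> (f i has_sum s i) A"
  shows "((\<lambda>x. \<Sum>i\<in>F. f i x) has_sum (\<Sum>i\<in>F. s i)) A"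
  using assms by (induction F rule: finite_induct) (simp_all add: has_sum_add)

lemma has_sum_complex_of_real_iff:
  "((\<lambda>x. complex_of_real (f x)) has_sum s) A \<longleftrightarrow> (f has_sum Re s) A \<and> s = of_real (Re s)"
proof
  assume sum: "((\<lambda>x. complex_of_real (f x)) has_sum s) A"
  then have "(f has_sum Re s) A"
    using has_sum_Re by fastforce
  moreover from this have "s = of_real (Re s)"
    using has_sum_unique[OF sum has_sum_of_real] by blast
  ultimately show "(f has_sum Re s) A \<and> s = of_real (Re s)" ..
next
  assume "(f has_sum Re s) A \<and> s = of_real (Re s)"
  then show "((\<lambda>x. complex_of_real (f x)) has_sum s) A"
    by (metis has_sum_of_real)
qed

lemma has_sum_complex_of_real_SigmaI:
  fixes f :: "'a \<times> 'b \<Rightarrow> real"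
  assumes inner: "\<And>x. x \<in> A \<Longrightarrow> ((\<lambda>y. complex_of_real (f (x, y))) has_sum g x) (B x)"
    and outer: "(g has_sum s) A"
    and nonneg: "\<And>x y. x \<in> A \<Longrightarrow> y \<in> B x \<Longrightarrow> f (x, y) \<ge> 0"
  shows "((\<lambda>z. complex_of_real (f z)) has_sum s) (Sigma A B)"
proof -
  have inner_Re: "((\<lambda>y. f (x, y)) has_sum Re (g x)) (B x)" and g_real: "g x = of_real (Re (g x))"
    if "x \<in> A" for x
    using inner[OF that] unfolding has_sum_complex_of_real_iff by blast+
  have outer_Re: "((\<lambda>x. Re (g x)) has_sum Re s) A"
    using has_sum_Re[OF outer] .
  have "f summable_on Sigma A B"
    using inner_Re has_sum_imp_summable[OF outer_Re] nonneg by (rule summable_on_SigmaI)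
  then have "(f has_sum Re s) (Sigma A B)"
    using inner_Re outer_Re by (intro has_sum_SigmaI)
  moreover have "s = of_real (Re s)"
  proof -
    have "(g has_sum of_real (Re s)) A \<longleftrightarrow> ((\<lambda>x. complex_of_real (Re (g x))) has_sum of_real (Re s)) A"
      by (rule has_sum_cong) (rule g_real)
    then have "(g has_sum of_real (Re s)) A"
      using has_sum_of_real[OF outer_Re] by simp
    then show ?thesis
      using outer by (rule has_sum_unique[symmetric])
  qed
  ultimately show ?thesis
    unfolding has_sum_complex_of_real_iff by simp
qed

definition matsubara_propagator :: "real \<Rightarrow> real \<Rightarrow> int \<Rightarrow> real" where
  "matsubara_propagator T E k = 2 * E / ((2 * pi * T * of_int k)\<^sup>2 + E\<^sup>2)"

lemma matsubara_propagator_nonneg: "E \<ge> 0 \<Longrightarrow> matsubara_propagator T E k \<ge> 0"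
  unfolding matsubara_propagator_def by (intro divide_nonneg_nonneg) auto

lemma bose_mult_exp:
  assumes "E / T \<noteq> 0"
  shows "bose T E * exp (E / T) = 1 + bose T E"
  using assms by (simp add: bose_def field_simps)

lemma one_plus_bose_mult_exp:
  assumes "E / T \<noteq> 0"
  shows "(1 + bose T E) * exp (- (E / T)) = bose T E"
  using assms by (simp add: bose_def exp_minus field_simps)

lemma matsubara_propagator_decomp:
  assumes T: "T > 0" and E: "E \<noteq> 0"
  shows "complex_of_real (matsubara_propagator T E k)
           = of_real (1 + bose T E) * matsubara_coeff T k E + of_real (bose T E) * matsubara_coeff T k (- E)"
proof -
  define w where "w = complex_of_real (2 * pi * T * of_int k)"
  have ET: "E / T \<noteq> 0"
    using T E by simp
  have "(1 + bose T E) * (exp (- E / T) - 1) = - 1" and "bose T E * (exp (- (- E) / T) - 1) = 1"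
    using one_plus_bose_mult_exp[OF ET] bose_mult_exp[OF ET] by (simp_all add: right_diff_distrib)
  then have "of_real (1 + bose T E) * (of_real (exp (- E / T)) - 1) = (- 1 :: complex)"
    and "of_real (bose T E) * (of_real (exp (- (- E) / T)) - 1) = (1 :: complex)"
    by (metis of_real_1 of_real_diff of_real_minus of_real_mult)+
  then have "of_real (1 + bose T E) * matsubara_coeff T k E + of_real (bose T E) * matsubara_coeff T k (- E)
               = - 1 / (\<i> * w - of_real E) + 1 / (\<i> * w + of_real E)"
    using E by (simp add: matsubara_coeff_def w_def times_divide_eq_right[symmetric])
  also have "\<dots> = of_real (2 * E) / (w ^ 2 + of_real E ^ 2)"
  proof -
    have "w ^ 2 + of_real E ^ 2 = of_real ((2 * pi * T * of_int k)\<^sup>2 + E\<^sup>2)"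
      by (simp add: w_def)
    moreover have "(2 * pi * T * of_int k)\<^sup>2 + E\<^sup>2 > 0"
      using E by (simp add: add_nonneg_pos)
    ultimately have nz: "w ^ 2 + of_real E ^ 2 \<noteq> 0"
      by (metis of_real_eq_0_iff less_irrefl)
    moreover from nz have "- (w * w) - of_real E * of_real E \<noteq> 0"
      by (metis (no_types) power2_eq_square minus_add_distrib neg_equal_0_iff_equal diff_conv_add_uminus)
    moreover have "\<i> * w - of_real E \<noteq> 0" "\<i> * w + of_real E \<noteq> 0"
      using E by (auto simp: w_def complex_eq_iff)
    ultimately show ?thesis
      by (simp add: field_simps power2_eq_square)
  qed
  also have "\<dots> = complex_of_real (matsubara_propagator T E k)"
    by (simp add: matsubara_propagator_def w_def)
  finally show ?thesis ..
qed

definition bose_weight :: "real \<Rightarrow> (nat \<Rightarrow> real) \<Rightarrow> nat set \<Rightarrow> nat set \<Rightarrow> real" where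
  "bose_weight T E A S = (\<Prod>j\<in>S. bose T (E j)) * (\<Prod>j\<in>A - S. 1 + bose T (E j))"

definition bose_expansion :: "real \<Rightarrow> (nat \<Rightarrow> real) \<Rightarrow> nat \<Rightarrow> int \<Rightarrow> complex" where
  "bose_expansion T E I m =
     (\<Sum>S\<in>Pow {..<I}. of_real (bose_weight T E {..<I} S) * matsubara_coeff T m (\<Sum>j<I. reflect_on S E j))"

definition matsubara_modes :: "nat \<Rightarrow> int \<Rightarrow> (nat \<Rightarrow> int) set" where
  "matsubara_modes I m = {n \<in> {..<I} \<rightarrow>\<^sub>E (UNIV :: int set). (\<Sum>j<I. n j) = m}"

lemma bose_expansion_Suc:
  "bose_expansion T E (Suc I) m =
     (\<Sum>S\<in>Pow {..<I}. of_real (bose_weight T E {..<I} S) *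
        (of_real (1 + bose T (E I)) * matsubara_coeff T m ((\<Sum>j<I. reflect_on S E j) + E I)
         + of_real (bose T (E I)) * matsubara_coeff T m ((\<Sum>j<I. reflect_on S E j) - E I)))"
proof -
  have weight: "bose_weight T E {..<Suc I} S = (1 + bose T (E I)) * bose_weight T E {..<I} S"
    and weight_insert: "bose_weight T E {..<Suc I} (insert I S) = bose T (E I) * bose_weight T E {..<I} S"
    if "S \<in> Pow {..<I}" for S
  proof -
    from that have "I \<notin> S" "finite S"
      by (auto intro: finite_subset)
    then show "bose_weight T E {..<Suc I} S = (1 + bose T (E I)) * bose_weight T E {..<I} S"
      and "bose_weight T E {..<Suc I} (insert I S) = bose T (E I) * bose_weight T E {..<I} S"
      by (simp_all add: bose_weight_def lessThan_Suc insert_Diff_if mult_ac)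
  qed
  have reflect: "reflect_on S E I = E I" "reflect_on (insert I S) E I = - E I"
    "(\<Sum>j<I. reflect_on (insert I S) E j) = (\<Sum>j<I. reflect_on S E j)"
    if "S \<in> Pow {..<I}" for S
    using that by (auto simp: reflect_on_def intro!: sum.cong)
  have split: "(\<Sum>S\<in>Pow {..<Suc I}. g S) = (\<Sum>S\<in>Pow {..<I}. g S + g (insert I S))" for g
    by (simp add: lessThan_Suc sum_Pow_insert sum.distrib)
  show ?thesis
    unfolding bose_expansion_def split
    by (intro sum.cong refl) (simp add: weight weight_insert reflect algebra_simps)
qed

lemma bose_expansion_Suc_convolution:
  assumes T: "T > 0" and E: "E I \<noteq> 0"
  shows "((\<lambda>k. of_real (T * matsubara_propagator T (E I) k) * (of_real T * bose_expansion T E I (m - k)))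
            has_sum of_real T * bose_expansion T E (Suc I) m) UNIV"
proof -
  let ?F = "\<lambda>S k. of_real T * matsubara_coeff T (m - k) (\<Sum>j<I. reflect_on S E j)"
  have "of_real (T * matsubara_propagator T (E I) k) * (of_real T * bose_expansion T E I (m - k))
          = of_real T * (\<Sum>S\<in>Pow {..<I}. of_real (bose_weight T E {..<I} S) *
              (of_real (1 + bose T (E I)) * (?F S k * matsubara_coeff T k (E I))
               + of_real (bose T (E I)) * (?F S k * matsubara_coeff T k (- E I))))" for k
    using T E
    by (simp add: bose_expansion_def matsubara_propagator_decomp sum_distrib_left sum.distrib algebra_simps)
  then have "((\<lambda>k. of_real (T * matsubara_propagator T (E I) k) * (of_real T * bose_expansion T E I (m - k)))
               has_sum of_real T * (\<Sum>S\<in>Pow {..<I}. of_real (bose_weight T E {..<I} S) *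
                 (of_real (1 + bose T (E I)) * matsubara_coeff T m ((\<Sum>j<I. reflect_on S E j) + E I)
                  + of_real (bose T (E I)) * matsubara_coeff T m ((\<Sum>j<I. reflect_on S E j) + - E I)))) UNIV"
    using T E
    by (simp only:) (intro has_sum_cmult_right has_sum_sum has_sum_add matsubara_coeff_convolution; simp)
  then show ?thesis
    by (simp add: bose_expansion_Suc)
qed

lemma bij_betw_matsubara_modes_Suc:
  "bij_betw (\<lambda>n. (n I, n(I := undefined))) (matsubara_modes (Suc I) m)
     (SIGMA k:UNIV. matsubara_modes I (m - k))"
proof (rule bij_betw_byWitness[where f' = "\<lambda>(k, n). n(I := k)"])
  show "\<forall>n\<in>matsubara_modes (Suc I) m. (\<lambda>(k, n). n(I := k)) (n I, n(I := undefined)) = n"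
    by simp
  show "\<forall>kn\<in>SIGMA k:UNIV. matsubara_modes I (m - k).
          (\<lambda>n. (n I, n(I := undefined))) ((\<lambda>(k, n). n(I := k)) kn) = kn"
    by (auto simp: matsubara_modes_def PiE_def extensional_def fun_eq_iff)
  show "(\<lambda>n. (n I, n(I := undefined))) ` matsubara_modes (Suc I) m \<subseteq> (SIGMA k:UNIV. matsubara_modes I (m - k))"
    by (auto simp: matsubara_modes_def PiE_def extensional_def)
  show "(\<lambda>(k, n). n(I := k)) ` (SIGMA k:UNIV. matsubara_modes I (m - k)) \<subseteq> matsubara_modes (Suc I) m"
    by (auto simp: matsubara_modes_def PiE_def extensional_def)
qed

lemma has_sum_matsubara_product:
  assumes T: "T > 0" and E: "\<And>j. j < I \<Longrightarrow> E j > 0"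
  shows "((\<lambda>n. complex_of_real (T ^ I * (\<Prod>j<I. matsubara_propagator T (E j) (n j))))
            has_sum of_real T * bose_expansion T E I m) (matsubara_modes I m)"
  using E
proof (induction I arbitrary: m)
  case 0
  have "matsubara_modes 0 m = (if m = 0 then {\<lambda>_. undefined} else {})"
    by (auto simp: matsubara_modes_def)
  moreover have "bose_expansion T E 0 m = (if m = 0 then 1 / of_real T else 0)"
    by (simp add: bose_expansion_def bose_weight_def matsubara_coeff_def)
  ultimately show ?case
    using T by (simp add: has_sum_finiteI)
next
  case (Suc I)
  define f where "f = (\<lambda>(k, n). T * matsubara_propagator T (E I) k * (T ^ I * (\<Prod>j<I. matsubara_propagator T (E j) (n j))))"
  have "((\<lambda>z. complex_of_real (f z)) has_sum of_real T * bose_expansion T E (Suc I) m)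
          (SIGMA k:UNIV. matsubara_modes I (m - k))"
  proof (rule has_sum_complex_of_real_SigmaI)
    show "((\<lambda>n. complex_of_real (f (k, n))) has_sum
            of_real (T * matsubara_propagator T (E I) k) * (of_real T * bose_expansion T E I (m - k)))
            (matsubara_modes I (m - k))" for k
      unfolding f_def using has_sum_cmult_right[OF Suc.IH[of "m - k"]] Suc.prems by simp
    show "((\<lambda>k. of_real (T * matsubara_propagator T (E I) k) * (of_real T * bose_expansion T E I (m - k)))
            has_sum of_real T * bose_expansion T E (Suc I) m) UNIV"
      using T Suc.prems[of I] by (intro bose_expansion_Suc_convolution) auto
    have "E j \<ge> 0" if "j < Suc I" for j
      using Suc.prems[OF that] by simp
    then show "f (k, n) \<ge> 0" for k n
      using T unfolding f_def by (auto intro!: mult_nonneg_nonneg prod_nonneg matsubara_propagator_nonneg)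
  qed
  then show ?case
    unfolding has_sum_reindex_bij_betw[OF bij_betw_matsubara_modes_Suc, symmetric]
    by (simp add: f_def mult_ac)
qed

lemma Dmats_eq_bose_expansion:
  assumes T: "T > 0" and I: "I \<ge> 1" and E: "\<And>j. j < I \<Longrightarrow> E j > 0"
  shows "complex_of_real (Dmats I m E T) = bose_expansion T E I m"
proof -
  define g where "g n = (\<Prod>j<I. 1 / ((2 * pi * T * of_int (n j))\<^sup>2 + (E j)\<^sup>2))" for n :: "nat \<Rightarrow> int"
  define C where "C = (\<Prod>j<I. 2 * E j) * T ^ (I - 1)"
  have prod_eq: "T ^ I * (\<Prod>j<I. matsubara_propagator T (E j) (n j)) = T * (C * g n)" for n
  proof -
    have "T ^ I = T * T ^ (I - 1)"
      using I by (simp flip: power_Suc)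
    then show ?thesis
      by (simp add: matsubara_propagator_def g_def C_def prod.distrib[symmetric])
  qed
  have "((\<lambda>n. complex_of_real (T * (C * g n))) has_sum of_real T * bose_expansion T E I m) (matsubara_modes I m)"
    using has_sum_matsubara_product[of T I E m, OF T E] by (simp only: prod_eq)
  then have sum: "((\<lambda>n. T * (C * g n)) has_sum Re (of_real T * bose_expansion T E I m)) (matsubara_modes I m)"
    and real: "of_real T * bose_expansion T E I m = of_real (Re (of_real T * bose_expansion T E I m))"
    unfolding has_sum_complex_of_real_iff by blast+
  from sum have "(\<Sum>\<^sub>\<infinity>n\<in>matsubara_modes I m. T * (C * g n)) = Re (of_real T * bose_expansion T E I m)"
    by (rule infsumI)
  moreover have "Dmats I m E T = C * (\<Sum>\<^sub>\<infinity>n\<in>matsubara_modes I m. g n)"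
    unfolding Dmats_def C_def g_def matsubara_modes_def ..
  ultimately have "T * Dmats I m E T = Re (of_real T * bose_expansion T E I m)"
    by (simp add: infsum_cmult_right')
  then have "of_real T * complex_of_real (Dmats I m E T) = of_real T * bose_expansion T E I m"
    using real by (metis of_real_mult)
  then show ?thesis
    using T by simp
qed

lemma bose_weight_mult_exp:
  assumes "finite A" and "S \<subseteq> A" and "\<And>j. j \<in> A \<Longrightarrow> E j / T \<noteq> 0"
  shows "bose_weight T E A S * exp (- (\<Sum>j\<in>A. reflect_on S E j) / T) = bose_weight T E A (A - S)"
proof -
  have "- (\<Sum>j\<in>A. reflect_on S E j) / T = (\<Sum>j\<in>A. - reflect_on S E j / T)"
    by (simp add: sum_negf sum_divide_distrib)
  then have "exp (- (\<Sum>j\<in>A. reflect_on S E j) / T) = (\<Prod>j\<in>A. exp (- reflect_on S E j / T))"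
    using assms(1) by (simp only: exp_sum)
  also have "\<dots> = (\<Prod>j\<in>A - S. exp (- reflect_on S E j / T)) * (\<Prod>j\<in>S. exp (- reflect_on S E j / T))"
    by (rule prod.subset_diff[OF assms(2,1)])
  finally have "bose_weight T E A S * exp (- (\<Sum>j\<in>A. reflect_on S E j) / T)
                  = (\<Prod>j\<in>S. bose T (E j) * exp (E j / T)) * (\<Prod>j\<in>A - S. (1 + bose T (E j)) * exp (- (E j / T)))"
    by (simp add: bose_weight_def reflect_on_def prod.distrib mult_ac)
  also have "\<dots> = (\<Prod>j\<in>S. 1 + bose T (E j)) * (\<Prod>j\<in>A - S. bose T (E j))"
    using assms by (auto simp: bose_mult_exp one_plus_bose_mult_exp intro!: arg_cong2[where f = "(*)"] prod.cong)
  also have "\<dots> = bose_weight T E A (A - S)"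
    using assms(2) by (simp add: bose_weight_def double_diff mult.commute)
  finally show ?thesis .
qed

lemma bose_expansion_eq_D0:
  assumes T: "T > 0" and E: "\<And>j. j < I \<Longrightarrow> E j > 0" and p: "p = 2 * pi * T * of_int m"
    and nonres: "\<And>S. \<i> * of_real p - of_real (\<Sum>j<I. reflect_on S E j) \<noteq> 0"
  shows "bose_expansion T E I m
           = (\<Sum>S\<in>Pow {..<I}. of_real (bose_weight T E {..<I} S) * D0 I p (reflect_on S E))"
proof -
  let ?A = "{..<I}"
  let ?w = "\<lambda>S. complex_of_real (bose_weight T E ?A S)"
  let ?X = "\<lambda>S. complex_of_real (\<Sum>j<I. reflect_on S E j)"
  have coeff: "matsubara_coeff T m (\<Sum>j<I. reflect_on S E j)
                 = (of_real (exp (- (\<Sum>j<I. reflect_on S E j) / T)) - 1) / (\<i> * of_real p - ?X S)" for S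
  proof -
    have "\<not> (m = 0 \<and> (\<Sum>j<I. reflect_on S E j) = 0)"
      using nonres[of S] p by (auto simp del: of_real_sum)
    then show ?thesis
      by (auto simp del: of_real_sum simp: matsubara_coeff_def p)
  qed
  have weight: "?w S * of_real (exp (- (\<Sum>j<I. reflect_on S E j) / T)) = ?w (?A - S)" if "S \<in> Pow ?A" for S
  proof -
    have "E j / T \<noteq> 0" if "j \<in> ?A" for j
      using that E[of j] T by simp
    with that show ?thesis
      using bose_weight_mult_exp[of ?A S E T] by (simp flip: of_real_mult)
  qed
  have "bose_expansion T E I m
          = (\<Sum>S\<in>Pow ?A. ?w (?A - S) / (\<i> * of_real p - ?X S)) - (\<Sum>S\<in>Pow ?A. ?w S / (\<i> * of_real p - ?X S))"
    unfolding bose_expansion_def sum_subtractf[symmetric]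
    by (intro sum.cong refl) (simp add: coeff weight[symmetric] diff_divide_distrib right_diff_distrib)
  also have "(\<Sum>S\<in>Pow ?A. ?w (?A - S) / (\<i> * of_real p - ?X S)) = (\<Sum>S\<in>Pow ?A. ?w S / (\<i> * of_real p + ?X S))"
    by (subst sum_Pow_Diff[symmetric]) (auto simp: sum_reflect_on_Diff double_diff intro!: sum.cong)
  finally show ?thesis
    by (simp add: D0_reflect_on sum_subtractf right_diff_distrib)
qed

lemma reflect_on_nonresonant:
  assumes "\<And>\<sigma>. \<sigma> \<in> {..<I} \<rightarrow> {-1, 1 :: real} \<Longrightarrow> \<i> * complex_of_real p - complex_of_real (\<Sum>j<I. \<sigma> j * E j) \<noteq> 0"
  shows "\<i> * complex_of_real p - of_real (\<Sum>j<I. reflect_on S E j) \<noteq> 0"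
proof -
  have "(\<Sum>j<I. (if j \<in> S then -1 else 1) * E j) = (\<Sum>j<I. reflect_on S E j)"
    by (intro sum.cong) (auto simp: reflect_on_def)
  moreover have "(\<lambda>j. if j \<in> S then -1 else 1 :: real) \<in> {..<I} \<rightarrow> {-1, 1}"
    by simp
  ultimately show ?thesis
    using assms by metis
qed

theorem mainTheorem1:
  fixes T :: real and I :: nat and E :: "nat \<Rightarrow> real" and m :: int and p :: real
  assumes T_pos: "T > 0"
    and I_pos: "I \<ge> 1"
    and E_pos: "\<And>j. j < I \<Longrightarrow> E j > 0"
    and p_def: "p = 2 * pi * T * of_int m"
    and nonres: "\<And>\<sigma>. \<sigma> \<in> {..<I} \<rightarrow> {-1, 1 :: real} \<Longrightarrow>
                  \<i> * complex_of_real p - complex_of_real (\<Sum>j<I. \<sigma> j * E j) \<noteq> 0"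
  shows "ops_prod one_plus_S {..<I} (D0 I p) E = 0
       \<and> complex_of_real (Dmats I m E T)
           = ops_prod (\<lambda>j. one_plus_c_S (complex_of_real (bose T (E j))) j) {..<I} (D0 I p) E
       \<and> complex_of_real (Dmats I m E T)
           = (\<Sum>J \<in> {J. J \<subset> {..<I}}.
                ops_prod (\<lambda>j. c_one_plus_S (complex_of_real (bose T (E j))) j) J (D0 I p) E)"
proof -
  have "complex_of_real (Dmats I m E T) = bose_expansion T E I m"
    using T_pos I_pos E_pos by (rule Dmats_eq_bose_expansion)
  also have "\<dots> = (\<Sum>S\<in>Pow {..<I}. of_real (bose_weight T E {..<I} S) * D0 I p (reflect_on S E))"
    using T_pos E_pos p_def reflect_on_nonresonant[OF nonres] by (rule bose_expansion_eq_D0)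
  also have "\<dots> = ops_prod (\<lambda>j. one_plus_c_S (complex_of_real (bose T (E j))) j) {..<I} (D0 I p) E"
    by (simp add: ops_prod_one_plus_c_S bose_weight_def)
  finally show ?thesis
    by (simp add: ops_prod_one_plus_S sum_proper_subsets_ops_prod_c_one_plus_S sum_Pow_D0_reflect_on)
qed

end
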